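(* Let $\mathcal L_H:\mathbb R^{D_1\times\cdots\times D_N}\to\mathbb R_{\ge0}$ be differentiable and $\phi_H((W^{(\nu)})_{\nu\in\mathcal T}):=\mathcal L_H(\mathcal W_H)$ for a hierarchical tensor factorization with mode tree $\mathcal T$. Let $\nu\in\mathrm{int}(\mathcal T)$, $\nu_c\in C(\nu)$, and $r\in[R_\nu]$. If both $W^{(\nu)}_{r,:}=0$ and $W^{(\nu_c)}_{:,r}=0$, then $$\frac{\partial}{\partial W^{(\nu)}_{r,:}}\phi_H\big((W^{(\nu')})_{\nu'\in\mathcal T}\big)=0\quad\text{and}\quad\frac{\partial}{\partial W^{(\nu_c)}_{:,r}}\phi_H\big((W^{(\nu')})_{\nu'\in\mathcal T}\big)=0.$$
   Context: Fix $N\in\mathbb N$, $D_1,\dots,D_N\in\mathbb N$; $[K]:=\{1,\dots,K\}$; $\otimes$ the tensor product. A mode tree $\mathcal T$ over $[N]$ is a rooted tree whose nodes are labeled by subsets of $[N]$, with exactly $N$ leaves labeled $\{1\},\dots,\{N\}$, and where each interior node's label is the union of its children's labels; nodes are identified with labels, root $[N]$, $\mathrm{int}(\mathcal T)$ interior nodes, $Pa(\nu)$ parent, $C(\nu)$ children (fixed order). A hierarchical tensor factorization has $R_\nu\in\mathbb N$ ($\nu\in\mathrm{int}(\mathcal T)$), $R_{Pa([N])}:=1$, $R_{\{n\}}:=D_n$, weight matrices $W^{(\nu)}\in\mathbb R^{R_\nu\times R_{Pa(\nu)}}$. Intermediate tensors: $\mathcal W^{(\{n\},r)}:=W^{(\{n\})}_{:,r}$;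 for $\nu\in\mathrm{int}(\mathcal T)\setminus\{[N]\}$ (leaves to root), $r\in[R_{Pa(\nu)}]$: $\mathcal W^{(\nu,r)}:=\pi_\nu\big(\sum_{r'=1}^{R_\nu}W^{(\nu)}_{r',r}\bigotimes_{\nu_c\in C(\nu)}\mathcal W^{(\nu_c,r')}\big)$; end tensor $\mathcal W_H:=\pi_{[N]}\big(\sum_{r'=1}^{R_{[N]}}W^{([N])}_{r',1}\bigotimes_{\nu_c\in C([N])}\mathcal W^{(\nu_c,r')}\big)$, where $\pi_\nu$ permutes modes (ordered by children, each child's elements ascending) into ascending order of the elements of $\nu$. *)

theory Defs
  imports "HOL-Analysis.Analysis"
begin

datatype mtree = MLeaf nat | MNode "mtree list"

fun lab :: "mtree \<Rightarrow> nat set" where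
  "lab (MLeaf n) = {n}"
| "lab (MNode cs) = (\<Union>c\<in>set cs. lab c)"

fun leaves :: "mtree \<Rightarrow> nat list" where
  "leaves (MLeaf n) = [n]"
| "leaves (MNode cs) = concat (map leaves cs)"

fun subtrees :: "mtree \<Rightarrow> mtree set" where
  "subtrees (MLeaf n) = {MLeaf n}"
| "subtrees (MNode cs) = insert (MNode cs) (\<Union>c\<in>set cs. subtrees c)"

text \<open>Valid mode tree over [N]: the leaves are labelled exactly {1},...,{N} (each once), and
nodes are identified with their labels, i.e. no interior node has fewer than two children
(a unary node would carry the same label as its child, an empty node is not a valid leaf).\<close>

definition mode_tree :: "nat \<Rightarrow> mtree \<Rightarrow> bool" where
  "mode_tree N t \<longleftrightarrow> mset (leaves t) = mset [1..<N+1] \<and>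
     (\<forall>s\<in>subtrees t. \<forall>cs. s = MNode cs \<longrightarrow> 2 \<le> length cs)"

fun node_rank :: "(nat \<Rightarrow> nat) \<Rightarrow> (nat set \<Rightarrow> nat) \<Rightarrow> mtree \<Rightarrow> nat" where
  "node_rank D R (MLeaf n) = D n"
| "node_rank D R (MNode cs) = R (lab (MNode cs))"

definition parent_rank :: "mtree \<Rightarrow> (nat set \<Rightarrow> nat) \<Rightarrow> mtree \<Rightarrow> nat" where
  "parent_rank t R s = (if s = t then 1 else
     R (lab (THE p. p \<in> subtrees t \<and> (\<exists>cs. p = MNode cs \<and> s \<in> set cs))))"

text \<open>Indexing modes
by their labels makes the mode permutations pi_nu implicit.\<close>

definition tidx :: "nat \<Rightarrow> (nat \<Rightarrow> nat) \<Rightarrow> (nat \<Rightarrow> nat) set" where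
  "tidx N D = {i. \<forall>n. (n \<in> {1..N} \<longrightarrow> i n \<in> {1..D n}) \<and> (n \<notin> {1..N} \<longrightarrow> i n = 0)}"

definition is_tensor :: "nat \<Rightarrow> (nat \<Rightarrow> nat) \<Rightarrow> ((nat \<Rightarrow> nat) \<Rightarrow> real) \<Rightarrow> bool" where
  "is_tensor N D T \<longleftrightarrow> (\<forall>i. i \<notin> tidx N D \<longrightarrow> T i = 0)"

definition tnorm :: "nat \<Rightarrow> (nat \<Rightarrow> nat) \<Rightarrow> ((nat \<Rightarrow> nat) \<Rightarrow> real) \<Rightarrow> real" where
  "tnorm N D H = sqrt (\<Sum>i\<in>tidx N D. (H i)\<^sup>2)"

definition tensor_differentiable ::
  "nat \<Rightarrow> (nat \<Rightarrow> nat) \<Rightarrow> (((nat \<Rightarrow> nat) \<Rightarrow> real) \<Rightarrow> real) \<Rightarrow> bool" where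
  "tensor_differentiable N D L \<longleftrightarrow>
     (\<forall>T. is_tensor N D T \<longrightarrow>
        (\<exists>G. \<forall>\<epsilon>>0. \<exists>\<delta>>0. \<forall>H. is_tensor N D H \<longrightarrow> tnorm N D H < \<delta> \<longrightarrow>
            \<bar>L (\<lambda>i. T i + H i) - L T - (\<Sum>i\<in>tidx N D. G i * H i)\<bar> \<le> \<epsilon> * tnorm N D H))"

text \<open>Weights: W nu a b is the entry (a,b) of W^(nu) (1-based).  Intermediate tensor
W^(nu,r) evaluated at the index i (depends only on i restricted to nu).  The tensor product
over children (which have disjoint labels) followed by pi_nu is the pointwise product.\<close>

fun inter_tensor :: "(nat set \<Rightarrow> nat) \<Rightarrow> (nat set \<Rightarrow> nat \<Rightarrow> nat \<Rightarrow> real) \<Rightarrow> mtree \<Rightarrow> nat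
      \<Rightarrow> (nat \<Rightarrow> nat) \<Rightarrow> real" where
  "inter_tensor R W (MLeaf n) r i = W {n} (i n) r"
| "inter_tensor R W (MNode cs) r i =
     (\<Sum>r'=1..R (lab (MNode cs)). W (lab (MNode cs)) r' r *
         prod_list (map (\<lambda>c. inter_tensor R W c r' i) cs))"

definition end_tensor :: "nat \<Rightarrow> (nat \<Rightarrow> nat) \<Rightarrow> mtree \<Rightarrow> (nat set \<Rightarrow> nat)
      \<Rightarrow> (nat set \<Rightarrow> nat \<Rightarrow> nat \<Rightarrow> real) \<Rightarrow> (nat \<Rightarrow> nat) \<Rightarrow> real" where
  "end_tensor N D t R W i = (if i \<in> tidx N D then inter_tensor R W t 1 i else 0)"

definition phi_H :: "nat \<Rightarrow> (nat \<Rightarrow> nat) \<Rightarrow> mtree \<Rightarrow> (nat set \<Rightarrow> nat)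
      \<Rightarrow> (((nat \<Rightarrow> nat) \<Rightarrow> real) \<Rightarrow> real) \<Rightarrow> (nat set \<Rightarrow> nat \<Rightarrow> nat \<Rightarrow> real) \<Rightarrow> real" where
  "phi_H N D t R L W = L (end_tensor N D t R W)"

definition upd_w :: "(nat set \<Rightarrow> nat \<Rightarrow> nat \<Rightarrow> real) \<Rightarrow> nat set \<Rightarrow> nat \<Rightarrow> nat \<Rightarrow> real
      \<Rightarrow> nat set \<Rightarrow> nat \<Rightarrow> nat \<Rightarrow> real" where
  "upd_w W \<nu> a b x = W(\<nu> := (W \<nu>)(a := (W \<nu> a)(b := x)))"

end

theory Submission
  imports Defs
begin

(* Let s be the parent of c.  The entries W^(s)_{r,b} and W^(c)_{a,r} enter the end tensor only
   through the terms W^(s)_{r,b} * \<Prod>_{c' \<in> C(s)} W^(c',r) of the contraction at s: labels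
   identify nodes, and c has no other parent.  Every such term contains both the zero entry
   W^(s)_{r,b} and the zero factor W^(c,r), and changing one of the two entries leaves the other
   zero.  Hence phi_H is constant along each of these coordinates; no property of L is needed. *)

lemma subtrees_refl: "u \<in> subtrees u"
  by (cases u) auto

lemma subtrees_trans: "u \<in> subtrees v \<Longrightarrow> v \<in> subtrees w \<Longrightarrow> u \<in> subtrees w"
  by (induction w arbitrary: v) auto

lemma child_in_subtrees: "MNode ds \<in> subtrees t \<Longrightarrow> d \<in> set ds \<Longrightarrow> d \<in> subtrees t"
  using subtrees_trans[of d "MNode ds" t] subtrees_refl[of d] by auto

lemma lab_subtrees_subset: "u \<in> subtrees v \<Longrightarrow> lab u \<subseteq> lab v"
  by (induction v) auto

lemma lab_eq_set_leaves: "lab u = set (leaves u)"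
  by (induction u) auto

lemma child_ne_ancestor:
  assumes "MNode ds \<in> subtrees v" and "d \<in> set ds"
  shows "d \<noteq> v"
proof -
  have child_smaller: "size e < size (MNode es)" if "e \<in> set es" for e es
    using size_list_estimation'[OF that, of "size e" size] by simp
  have "size u \<le> size v" if "u \<in> subtrees v" for u v
    using that
  proof (induction v arbitrary: u)
    case (MNode es)
    then consider "u = MNode es" | e where "e \<in> set es" "u \<in> subtrees e"
      by auto
    then show ?case
    proof cases
      case 2
      then show ?thesis
        using MNode.IH[OF 2] child_smaller[OF 2(1)] by linarith
    qed simp
  qed simp
  then show ?thesis
    using assms child_smaller by fastforce
qed

(* The part of mode_tree that is inherited by subtrees. *)
definition wf_mtree :: "mtree \<Rightarrow> bool" where
  "wf_mtree u \<longleftrightarrow> distinct (leaves u) \<and> (\<forall>v\<in>subtrees u. \<forall>ds. v = MNode ds \<longrightarrow> 2 \<le> length ds)"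

lemma wf_mtree_if_mode_tree: "mode_tree N t \<Longrightarrow> wf_mtree t"
  unfolding mode_tree_def wf_mtree_def
  using mset_eq_imp_distinct_iff[of "leaves t" "[1..<N+1]"] by auto

lemma lab_subtrees_mode_tree: "mode_tree N t \<Longrightarrow> u \<in> subtrees t \<Longrightarrow> lab u \<subseteq> {1..N}"
proof -
  assume "mode_tree N t" "u \<in> subtrees t"
  then have "lab t = set [1..<N+1]"
    unfolding mode_tree_def lab_eq_set_leaves by (metis set_mset_mset)
  then show "lab u \<subseteq> {1..N}"
    using lab_subtrees_subset[OF \<open>u \<in> subtrees t\<close>] by auto
qed

lemma wf_mtree_subtrees: "wf_mtree v \<Longrightarrow> u \<in> subtrees v \<Longrightarrow> wf_mtree u"
proof -
  have "distinct (leaves v) \<Longrightarrow> u \<in> subtrees v \<Longrightarrow> distinct (leaves u)"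
    by (induction v) (auto simp: distinct_concat_iff)
  then show "wf_mtree v \<Longrightarrow> u \<in> subtrees v \<Longrightarrow> wf_mtree u"
    unfolding wf_mtree_def using subtrees_trans by blast
qed

lemma wf_mtree_child: "wf_mtree (MNode ds) \<Longrightarrow> d \<in> set ds \<Longrightarrow> wf_mtree d"
  using wf_mtree_subtrees child_in_subtrees subtrees_refl by blast

lemma wf_mtree_lab_nonempty: "wf_mtree u \<Longrightarrow> lab u \<noteq> {}"
proof (induction u)
  case (MNode ds)
  then have "ds \<noteq> []"
    by (auto simp: wf_mtree_def)
  then obtain d where "d \<in> set ds"
    by (meson list.set_sel(1))
  with MNode show ?case
    using MNode.IH[OF \<open>d \<in> set ds\<close>] wf_mtree_child by auto
qed simp

lemma wf_mtree_distinct_children_leaves: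
  assumes "wf_mtree (MNode ds)"
  shows "distinct (map leaves ds)"
proof -
  have "leaves d \<noteq> []" if "d \<in> set ds" for d
    using wf_mtree_lab_nonempty[OF wf_mtree_child[OF assms that]] by (simp add: lab_eq_set_leaves)
  then have "removeAll [] (map leaves ds) = map leaves ds"
    by (intro removeAll_id) (metis imageE set_map)
  then show ?thesis
    using assms by (simp add: wf_mtree_def distinct_concat_iff)
qed

lemma wf_mtree_children_lab_disjoint:
  assumes "wf_mtree (MNode ds)" "d \<in> set ds" "d' \<in> set ds" "d \<noteq> d'"
  shows "lab d \<inter> lab d' = {}"
proof -
  have "inj_on leaves (set ds)"
    using wf_mtree_distinct_children_leaves[OF assms(1)] by (simp add: distinct_map)
  then have "leaves d \<noteq> leaves d'"
    using assms(2-4) inj_on_eq_iff by metis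
  moreover have "distinct (concat (map leaves ds))"
    using assms(1) by (simp add: wf_mtree_def)
  ultimately have "set (leaves d) \<inter> set (leaves d') = {}"
    using assms(2,3) unfolding distinct_concat_iff by simp
  then show ?thesis
    by (simp add: lab_eq_set_leaves)
qed

lemma wf_mtree_child_lab_psubset:
  assumes wf: "wf_mtree (MNode ds)" and d: "d \<in> set ds"
  shows "lab d \<subset> lab (MNode ds)"
proof -
  have "distinct ds" "2 \<le> length ds"
    using wf wf_mtree_distinct_children_leaves[OF wf] by (auto simp: wf_mtree_def distinct_map)
  then have "\<not> set ds \<subseteq> {d}"
    using card_mono[of "{d}" "set ds"] distinct_card[of ds] by auto
  then obtain d' where d': "d' \<in> set ds" "d' \<noteq> d"
    by blast
  then have "lab d' \<noteq> {}" "lab d' \<inter> lab d = {}"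
    using wf d wf_mtree_child wf_mtree_lab_nonempty wf_mtree_children_lab_disjoint by blast+
  then show ?thesis
    using d d' by auto
qed

lemma wf_mtree_proper_subtree_lab_psubset:
  "wf_mtree u \<Longrightarrow> v \<in> subtrees u \<Longrightarrow> v \<noteq> u \<Longrightarrow> lab v \<subset> lab u"
  by (cases u) (fastforce dest: wf_mtree_child_lab_psubset lab_subtrees_subset)+

lemma wf_mtree_overlapping_subtrees_same_child:
  assumes "wf_mtree (MNode ds)" "e \<in> set ds" "v \<in> subtrees e" "e' \<in> set ds" "v' \<in> subtrees e'"
    and "lab v \<inter> lab v' \<noteq> {}"
  shows "e = e'"
  using assms wf_mtree_children_lab_disjoint lab_subtrees_subset by blast

lemma inj_on_lab_subtrees: "wf_mtree u \<Longrightarrow> inj_on lab (subtrees u)"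
proof (induction u)
  case (MNode ds)
  show ?case
  proof (rule inj_onI)
    fix v v' assume v: "v \<in> subtrees (MNode ds)" "v' \<in> subtrees (MNode ds)" "lab v = lab v'"
    show "v = v'"
    proof (cases "v = MNode ds \<or> v' = MNode ds")
      case True
      then show ?thesis
        using v wf_mtree_proper_subtree_lab_psubset[OF MNode.prems] by blast
    next
      case False
      then obtain e e' where e: "e \<in> set ds" "v \<in> subtrees e" "e' \<in> set ds" "v' \<in> subtrees e'"
        using v by auto
      have "lab v \<noteq> {}"
        using MNode.prems v(1) wf_mtree_subtrees wf_mtree_lab_nonempty by blast
      then have "e = e'"
        using wf_mtree_overlapping_subtrees_same_child[OF MNode.prems e] v(3) by simp
      then show ?thesis
        using MNode.IH[OF e(1) wf_mtree_child[OF MNode.prems e(1)]] e v(3) by (auto dest: inj_onD)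
    qed
  qed
qed simp

lemma wf_mtree_parent_unique:
  "wf_mtree u \<Longrightarrow> MNode ds \<in> subtrees u \<Longrightarrow> MNode ds' \<in> subtrees u
    \<Longrightarrow> d \<in> set ds \<Longrightarrow> d \<in> set ds' \<Longrightarrow> ds = ds'"
proof (induction u)
  case (MNode es)
  have lab_d: "lab d \<inter> lab d \<noteq> {}"
    using MNode.prems wf_mtree_subtrees child_in_subtrees wf_mtree_lab_nonempty by blast
  have not_below_child: False
    if "d \<in> set es" "e \<in> set es" "MNode fs \<in> subtrees e" "d \<in> set fs" for fs e
  proof -
    have "d = e"
      using wf_mtree_overlapping_subtrees_same_child[OF MNode.prems(1) that(1) subtrees_refl
          that(2) child_in_subtrees[OF that(3,4)] lab_d] .
    then show False
      using child_ne_ancestor[OF that(3,4)] by blast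
  qed
  consider "ds = es" "ds' = es"
    | e where "e \<in> set es" "MNode ds \<in> subtrees e" "ds' = es"
    | e where "e \<in> set es" "ds = es" "MNode ds' \<in> subtrees e"
    | e e' where "e \<in> set es" "MNode ds \<in> subtrees e" "e' \<in> set es" "MNode ds' \<in> subtrees e'"
    using MNode.prems(2,3) by auto
  then show ?case
  proof cases
    case (4 e e')
    have "e = e'"
      using wf_mtree_overlapping_subtrees_same_child[OF MNode.prems(1) 4(1)
          child_in_subtrees[OF 4(2) MNode.prems(4)] 4(3) child_in_subtrees[OF 4(4) MNode.prems(5)] lab_d] .
    then show ?thesis
      using MNode.IH[OF 4(1) wf_mtree_child[OF MNode.prems(1) 4(1)]] 4 MNode.prems(4,5) by blast
  qed (use not_below_child MNode.prems(4,5) in blast)+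
qed simp

lemma parent_rank_child:
  assumes "wf_mtree t" "MNode ds \<in> subtrees t" "d \<in> set ds"
  shows "parent_rank t R d = R (lab (MNode ds))"
proof -
  have "(THE p. p \<in> subtrees t \<and> (\<exists>cs. p = MNode cs \<and> d \<in> set cs)) = MNode ds"
    using assms wf_mtree_parent_unique by (intro the_equality) blast+
  then show ?thesis
    using child_ne_ancestor[OF assms(2,3)] by (simp add: parent_rank_def)
qed

lemma inter_tensor_eq_0_if_column_0:
  assumes "lab u \<subseteq> {1..N}" "i \<in> tidx N D" "\<forall>a\<in>{1..node_rank D R u}. W (lab u) a r = 0"
  shows "inter_tensor R W u r i = 0"
proof (cases u)
  case (MLeaf n)
  then have "i n \<in> {1..D n}"
    using assms(1,2) by (auto simp: tidx_def)
  then show ?thesis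
    using assms(3) MLeaf by simp
qed (use assms(3) in simp)

(* W^(c,r) is the only intermediate tensor that may change; the range of rp is needed because
   the vanishing of the edge term is only known for the columns of W^(s) that are used. *)
lemma inter_tensor_eq_if_edge_term_vanishes:
  assumes wf: "wf_mtree t" and s: "s = MNode cs" "s \<in> subtrees t" and c: "c \<in> set cs"
    and agree: "\<And>\<nu> a b. W' \<nu> a b \<noteq> W \<nu> a b \<Longrightarrow> (\<nu> = lab s \<and> a = r) \<or> (\<nu> = lab c \<and> b = r)"
    and vanish: "\<And>V b. V \<in> {W, W'} \<Longrightarrow> b \<in> {1..parent_rank t R s}
      \<Longrightarrow> V (lab s) r b * inter_tensor R V c r i = 0"
  shows "u \<in> subtrees t \<Longrightarrow> rp \<in> {1..parent_rank t R u} \<Longrightarrow> (u = c \<Longrightarrow> rp \<noteq> r)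
    \<Longrightarrow> inter_tensor R W' u rp i = inter_tensor R W u rp i"
proof -
  have c_sub: "c \<in> subtrees t"
    using child_in_subtrees s c by blast
  have weight: "W' (lab u) a b = W (lab u) a b"
    if "u \<in> subtrees t" "u = s \<Longrightarrow> a \<noteq> r" "u = c \<Longrightarrow> b \<noteq> r" for u a b
  proof (rule ccontr)
    assume "W' (lab u) a b \<noteq> W (lab u) a b"
    then consider "lab u = lab s" "a = r" | "lab u = lab c" "b = r"
      using agree by blast
    then show False
      using that inj_onD[OF inj_on_lab_subtrees[OF wf], of u] s(2) c_sub by cases blast+
  qed
  show "inter_tensor R W' u rp i = inter_tensor R W u rp i"
    if "u \<in> subtrees t" "rp \<in> {1..parent_rank t R u}" "u = c \<Longrightarrow> rp \<noteq> r" for u rp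
    using that
  proof (induction u arbitrary: rp)
    case (MLeaf n)
    then show ?case
      using weight[of "MLeaf n" "i n" rp] s(1) by simp
  next
    case (MNode ds)
    let ?u = "MNode ds"
    show ?case
      unfolding inter_tensor.simps
    proof (rule sum.cong[OF refl])
      fix r' assume r': "r' \<in> {1..R (lab ?u)}"
      let ?term = "\<lambda>V. V (lab ?u) r' rp * prod_list (map (\<lambda>d. inter_tensor R V d r' i) ds)"
      show "?term W' = ?term W"
      proof (cases "?u = s \<and> r' = r")
        case True
        have zero: "?term V = 0" if "V \<in> {W, W'}" for V
        proof -
          have "V (lab s) r rp = 0 \<or> inter_tensor R V c r i = 0"
            using vanish[OF that, of rp] MNode.prems(2) True by simp
          then show ?thesis
            using True c s(1) by (auto simp: prod_list_zero_iff)
        qed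
        show ?thesis
          using zero[OF insertI1] zero[OF insertI2[OF singletonI]] by linarith
      next
        case False
        have "inter_tensor R W' d r' i = inter_tensor R W d r' i" if d: "d \<in> set ds" for d
        proof (rule MNode.IH[OF d])
          show "d \<in> subtrees t"
            using child_in_subtrees[OF MNode.prems(1) d] .
          show "r' \<in> {1..parent_rank t R d}"
            using parent_rank_child[OF wf MNode.prems(1) d] r' by simp
          show "r' \<noteq> r" if "d = c"
            using wf_mtree_parent_unique[OF wf MNode.prems(1) s(2)[unfolded s(1)]] d c that False s(1)
            by blast
        qed
        then show ?thesis
          using weight[of ?u r' rp] MNode.prems False by (simp cong: map_cong)
      qed
    qed
  qed
qed

lemma upd_w_apply_neqD:
  "upd_w W \<nu> a b x \<nu>' a' b' \<noteq> W \<nu>' a' b' \<Longrightarrow> \<nu>' = \<nu> \<and> a' = a \<and> b' = b"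
  by (simp add: upd_w_def split: if_splits)

lemma end_tensor_eq_if_edge_term_vanishes:
  assumes wf: "wf_mtree t" and s: "s = MNode cs" "s \<in> subtrees t" and c: "c \<in> set cs"
    and agree: "\<And>\<nu> a b. W' \<nu> a b \<noteq> W \<nu> a b \<Longrightarrow> (\<nu> = lab s \<and> a = r) \<or> (\<nu> = lab c \<and> b = r)"
    and vanish: "\<And>V b i. V \<in> {W, W'} \<Longrightarrow> b \<in> {1..parent_rank t R s} \<Longrightarrow> i \<in> tidx N D
      \<Longrightarrow> V (lab s) r b * inter_tensor R V c r i = 0"
  shows "end_tensor N D t R W' = end_tensor N D t R W"
proof
  fix i
  have "t \<noteq> c"
    using child_ne_ancestor s c by blast
  then have "i \<in> tidx N D \<Longrightarrow> inter_tensor R W' t 1 i = inter_tensor R W t 1 i"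
    using inter_tensor_eq_if_edge_term_vanishes[OF wf s c agree vanish subtrees_refl]
    by (simp add: parent_rank_def)
  then show "end_tensor N D t R W' i = end_tensor N D t R W i"
    by (simp add: end_tensor_def)
qed

lemma end_tensor_upd_w_row_eq:
  assumes mt: "mode_tree N t" and s: "s = MNode cs" "s \<in> subtrees t" and c: "c \<in> set cs"
    and column_0: "\<forall>a\<in>{1..node_rank D R c}. W (lab c) a r = 0"
  shows "end_tensor N D t R (upd_w W (lab s) r b x) = end_tensor N D t R W"
proof (rule end_tensor_eq_if_edge_term_vanishes[OF wf_mtree_if_mode_tree[OF mt] s c])
  fix V b' i
  assume V: "V \<in> {W, upd_w W (lab s) r b x}" and i: "i \<in> tidx N D"
  have lab_ne: "lab c \<noteq> lab s"
    using wf_mtree_child_lab_psubset wf_mtree_subtrees wf_mtree_if_mode_tree[OF mt] s c by blast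
  have "V (lab c) = W (lab c)"
    using V by (auto simp: upd_w_def lab_ne)
  moreover have "c \<in> subtrees t"
    using child_in_subtrees s c by blast
  ultimately have "inter_tensor R V c r i = 0"
    by (intro inter_tensor_eq_0_if_column_0[OF lab_subtrees_mode_tree[OF mt] i]) (simp_all add: column_0)
  then show "V (lab s) r b' * inter_tensor R V c r i = 0"
    by simp
qed (use upd_w_apply_neqD in blast)

lemma end_tensor_upd_w_column_eq:
  assumes wf: "wf_mtree t" and s: "s = MNode cs" "s \<in> subtrees t" and c: "c \<in> set cs"
    and row_0: "\<forall>b\<in>{1..parent_rank t R s}. W (lab s) r b = 0"
  shows "end_tensor N D t R (upd_w W (lab c) a r x) = end_tensor N D t R W"
proof (rule end_tensor_eq_if_edge_term_vanishes[OF wf s c])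
  fix V b i
  assume V: "V \<in> {W, upd_w W (lab c) a r x}" and b: "b \<in> {1..parent_rank t R s}"
  have lab_ne: "lab s \<noteq> lab c"
    using wf_mtree_child_lab_psubset wf_mtree_subtrees wf s c by blast
  have "V (lab s) = W (lab s)"
    using V by (auto simp: upd_w_def lab_ne)
  then show "V (lab s) r b * inter_tensor R V c r i = 0"
    using row_0 b by simp
qed (use upd_w_apply_neqD in blast)

theorem lemma11:
  fixes N :: nat and D :: "nat \<Rightarrow> nat" and t :: mtree and R :: "nat set \<Rightarrow> nat"
    and L :: "((nat \<Rightarrow> nat) \<Rightarrow> real) \<Rightarrow> real"
    and W :: "nat set \<Rightarrow> nat \<Rightarrow> nat \<Rightarrow> real"
    and s c :: mtree and cs :: "mtree list" and r :: nat
  assumes "mode_tree N t"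
    and "\<forall>T. is_tensor N D T \<longrightarrow> L T \<ge> 0"
    and "tensor_differentiable N D L"
    and "s \<in> subtrees t" and "s = MNode cs" and "c \<in> set cs"
    and "r \<in> {1..R (lab s)}"
    and "\<forall>b\<in>{1..parent_rank t R s}. W (lab s) r b = 0"
    and "\<forall>a\<in>{1..node_rank D R c}. W (lab c) a r = 0"
  shows "(\<forall>b\<in>{1..parent_rank t R s}.
            ((\<lambda>x. phi_H N D t R L (upd_w W (lab s) r b x)) has_real_derivative 0)
              (at (W (lab s) r b)))
       \<and> (\<forall>a\<in>{1..node_rank D R c}.
            ((\<lambda>x. phi_H N D t R L (upd_w W (lab c) a r x)) has_real_derivative 0)
              (at (W (lab c) a r)))"
proof -
  have "end_tensor N D t R (upd_w W (lab s) r b x) = end_tensor N D t R W" for b x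
    using end_tensor_upd_w_row_eq assms(1,4-6,9) by blast
  moreover have "end_tensor N D t R (upd_w W (lab c) a r x) = end_tensor N D t R W" for a x
    using end_tensor_upd_w_column_eq wf_mtree_if_mode_tree assms(1,4-6,8) by blast
  ultimately show ?thesis
    by (simp add: phi_H_def)
qed

end
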